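(* Let $0<c_1<1/4$. There exists $N_0=N_0(c_1,\rho,b,d)>0$ such that for every $\varepsilon\in(0,1)$ and every integer $N$ with $N_0\le N\le|\log\varepsilon|^{\frac1{2c_1}}$, for all $E\in\mathbb R$ and $\vec\omega\in[0,2\pi]^b$ there is a set $\mathbf X_N=\mathbf X_N(E,\vec\omega)\subset\mathbb R^d$ such that $$\sup_{1\le j\le d,\ \Theta_j^\neg\in\mathbb R^{d-1}}\mathrm{mes}\big(\mathbf X_N(\Theta_j^\neg)\big)\le e^{-N^{c_1}},$$ and for all $\Theta\notin\mathbf X_N$ and $Q\in\mathcal E_N^0$, $$\|G_Q(E;\Theta)\|\le e^{\sqrt N},\qquad |G_Q(E;\Theta)(\mathbf n,\mathbf n')|\le e^{-\frac{4\rho}{5}|\mathbf n-\mathbf n'|}\ \text{ for }|\mathbf n-\mathbf n'|\ge N/10.$$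
   Context: Standing setup: $d\ge1$, $b_i\in\mathbb N$, $b=\sum_{i=1}^db_i>d$; $\rho\in(0,1)$; $V:\mathbb T^b\to\mathbb R$ real analytic with mean zero and $|\widehat V_{\mathbf k}|\le e^{-\rho|\mathbf k|}$, $|\cdot|$ the sup norm. For $\varepsilon>0$, $\vec\omega=(\vec\omega_1,\dots,\vec\omega_d)\in[0,2\pi]^b$, $\Theta\in\mathbb R^d$: $(h(\Theta)Z)_{\mathbf k}=\sum_{\mathbf k'\in\mathbb Z^b}\varepsilon\widehat V_{\mathbf k-\mathbf k'}Z_{\mathbf k'}+\sum_{i=1}^d(\Theta_i+\mathbf k_i\cdot\vec\omega_i)^2Z_{\mathbf k}$; for finite $\Lambda\subset\mathbb Z^b$, $G_\Lambda(E;\Theta)=(R_\Lambda h(\Theta)R_\Lambda-E)^{-1}$. An elementary region of size $N$ centered at $0$ is either $[-N,N]^b\cap\mathbb Z^b$ or $[-N,N]^b\cap\mathbb Z^b\setminus\{\mathbf k: k_{ij}\in\varsigma_{ij}\ \forall i,j\}$ with each $\varsigma_{ij}\in\{\{n<0\},\{n>0\},\emptyset\}$ and at least two nonempty; $\mathcal E_N^0$ denotes the set of these. $\Theta_j^\neg$ is $\Theta$ with the $j$-th coordinate removed, $X(\Theta_j^\neg)=\{\Theta_j:(\Theta_j,\Theta_j^\neg)\in X\}$. *)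

theory Defs
  imports "HOL-Analysis.Analysis"
begin

text \<open>Lattice points of Z^b are indexed by pairs (i,j) with i < d, j < b_i;
  a point is a function on pairs that vanishes outside this index set.\<close>

type_synonym lat = "nat \<times> nat \<Rightarrow> int"

definition idx :: "nat \<Rightarrow> (nat \<Rightarrow> nat) \<Rightarrow> (nat \<times> nat) set" where
  "idx d bs = {(i, j). i < d \<and> j < bs i}"

definition lattice :: "nat \<Rightarrow> (nat \<Rightarrow> nat) \<Rightarrow> lat set" where
  "lattice d bs = {k. \<forall>p. p \<notin> idx d bs \<longrightarrow> k p = 0}"

definition supnorm :: "nat \<Rightarrow> (nat \<Rightarrow> nat) \<Rightarrow> lat \<Rightarrow> int" where
  "supnorm d bs k = Max ((\<lambda>p. \<bar>k p\<bar>) ` idx d bs)"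

definition lat_diff :: "lat \<Rightarrow> lat \<Rightarrow> lat" where
  "lat_diff k k' = (\<lambda>p. k p - k' p)"

text \<open>Fourier coefficients of a real-valued, mean-zero V on T^b with
  |V_k| <= exp(-rho |k|).\<close>
definition admissible_V :: "nat \<Rightarrow> (nat \<Rightarrow> nat) \<Rightarrow> real \<Rightarrow> (lat \<Rightarrow> complex) \<Rightarrow> bool" where
  "admissible_V d bs \<rho> Vh \<longleftrightarrow>
     Vh (\<lambda>_. 0) = 0 \<and>
     (\<forall>k\<in>lattice d bs. Vh (\<lambda>p. - k p) = cnj (Vh k)) \<and>
     (\<forall>k\<in>lattice d bs. norm (Vh k) \<le> exp (- \<rho> * real_of_int (supnorm d bs k)))"

text \<open>R^d as functions nat => real vanishing from index d on.\<close>
definition Rd :: "nat \<Rightarrow> (nat \<Rightarrow> real) set" where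
  "Rd d = {\<theta>. \<forall>i. d \<le> i \<longrightarrow> \<theta> i = 0}"

text \<open>Section X(Theta_j^neg) of X in direction j\<close>
definition slice :: "(nat \<Rightarrow> real) set \<Rightarrow> nat \<Rightarrow> (nat \<Rightarrow> real) \<Rightarrow> real set" where
  "slice X j \<theta> = {t. \<theta>(j := t) \<in> X}"

text \<open>Matrix entries of R_Q (h(Theta) - E) R_Q, indices n, n' in Q.\<close>
definition hmat :: "nat \<Rightarrow> (nat \<Rightarrow> nat) \<Rightarrow> (lat \<Rightarrow> complex) \<Rightarrow> real \<Rightarrow>
     ((nat \<times> nat) \<Rightarrow> real) \<Rightarrow> (nat \<Rightarrow> real) \<Rightarrow> real \<Rightarrow> lat \<Rightarrow> lat \<Rightarrow> complex" where
  "hmat d bs Vh \<epsilon> \<omega> \<theta> E n n' =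
     complex_of_real \<epsilon> * Vh (lat_diff n n') +
     (if n = n' then complex_of_real
        ((\<Sum>i<d. (\<theta> i + (\<Sum>j<bs i. real_of_int (n (i, j)) * \<omega> (i, j)))\<^sup>2) - E)
      else 0)"

definition is_inverse_on :: "lat set \<Rightarrow> (lat \<Rightarrow> lat \<Rightarrow> complex) \<Rightarrow> (lat \<Rightarrow> lat \<Rightarrow> complex) \<Rightarrow> bool" where
  "is_inverse_on Q A G \<longleftrightarrow>
     (\<forall>n\<in>Q. \<forall>m\<in>Q. (\<Sum>k\<in>Q. A n k * G k m) = (if n = m then 1 else 0)) \<and>
     (\<forall>n\<in>Q. \<forall>m\<in>Q. (\<Sum>k\<in>Q. G n k * A k m) = (if n = m then 1 else 0))"

definition invertible_on :: "lat set \<Rightarrow> (lat \<Rightarrow> lat \<Rightarrow> complex) \<Rightarrow> bool" where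
  "invertible_on Q A \<longleftrightarrow> (\<exists>G. is_inverse_on Q A G)"

definition inv_on :: "lat set \<Rightarrow> (lat \<Rightarrow> lat \<Rightarrow> complex) \<Rightarrow> lat \<Rightarrow> lat \<Rightarrow> complex" where
  "inv_on Q A = (SOME G. is_inverse_on Q A G)"

definition green :: "nat \<Rightarrow> (nat \<Rightarrow> nat) \<Rightarrow> (lat \<Rightarrow> complex) \<Rightarrow> real \<Rightarrow>
     ((nat \<times> nat) \<Rightarrow> real) \<Rightarrow> lat set \<Rightarrow> real \<Rightarrow> (nat \<Rightarrow> real) \<Rightarrow> lat \<Rightarrow> lat \<Rightarrow> complex" where
  "green d bs Vh \<epsilon> \<omega> Q E \<theta> = inv_on Q (hmat d bs Vh \<epsilon> \<omega> \<theta> E)"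

definition l2norm :: "lat set \<Rightarrow> (lat \<Rightarrow> complex) \<Rightarrow> real" where
  "l2norm Q u = sqrt (\<Sum>m\<in>Q. (cmod (u m))\<^sup>2)"

definition opnorm :: "lat set \<Rightarrow> (lat \<Rightarrow> lat \<Rightarrow> complex) \<Rightarrow> real" where
  "opnorm Q G = (SUP u\<in>{u. l2norm Q u \<le> 1}. l2norm Q (\<lambda>n. \<Sum>m\<in>Q. G n m * u m))"

text \<open>Elementary regions of size N centred at 0. A sign pattern s assigns to each
  (i,j) the constraint varsigma_ij: -1 = {n<0}, 1 = {n>0}, 0 = empty (no constraint).\<close>
definition cube :: "nat \<Rightarrow> (nat \<Rightarrow> nat) \<Rightarrow> nat \<Rightarrow> lat set" where
  "cube d bs N = {k \<in> lattice d bs. \<forall>p\<in>idx d bs. \<bar>k p\<bar> \<le> int N}"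

definition elem_regions :: "nat \<Rightarrow> (nat \<Rightarrow> nat) \<Rightarrow> nat \<Rightarrow> lat set set" where
  "elem_regions d bs N =
     {cube d bs N} \<union>
     {cube d bs N - {k. \<forall>p\<in>idx d bs. s p \<noteq> 0 \<longrightarrow> sgn (k p) = s p} | s.
        (\<forall>p\<in>idx d bs. s p \<in> {-1, 0, 1}) \<and>
        (\<exists>p\<in>idx d bs. \<exists>q\<in>idx d bs. p \<noteq> q \<and> s p \<noteq> 0 \<and> s q \<noteq> 0)}"

end

theory Submission
  imports Defs "Jordan_Normal_Form.Determinant" "HOL-Real_Asymp.Real_Asymp"
begin

text \<open>At the initial scale the hopping term is tiny: \<open>N \<le> \<bar>log \<epsilon>\<bar>\<^bsup>1/(2c\<^sub>1)\<^esup>\<close> means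
  \<open>\<epsilon> \<le> exp (- N\<^bsup>2c\<^sub>1\<^esup>)\<close>, while an elementary region has at most \<open>(2N+1)\<^bsup>b\<^esup>\<close> sites.
  Take for \<open>X\<^sub>N\<close> the set of \<open>\<Theta>\<close> for which some diagonal entry
  \<open>\<Sum>\<^sub>i (\<Theta>\<^sub>i + k\<^sub>i \<cdot> \<omega>\<^sub>i)\<^sup>2 - E\<close>, \<open>k\<close> in the cube, lies within \<open>\<delta> = exp (-3 N\<^bsup>c\<^sub>1\<^esup>)\<close> of zero.
  Off \<open>X\<^sub>N\<close> the restricted operator is a diagonal matrix bounded below by \<open>\<delta>\<close> plus a
  perturbation of size \<open>\<epsilon> \<cdot> #Q \<ll> \<delta>\<^sup>2\<close>. A maximum principle for the weighted columns
  \<open>exp (\<alpha> |n - m|) G(n, m)\<close>, \<open>\<alpha> \<le> \<rho>\<close>, whose weights are moved by at most the decay of \<open>V\<close>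
  (triangle inequality), yields invertibility, \<open>|G(n, m)| \<le> 2/\<delta>\<close>, hence
  \<open>\<parallel>G\<parallel> \<le> 2 (#Q)\<^sup>2/\<delta> \<le> e\<^bsup>\<surd>N\<^esup>\<close>, and \<open>|G(n, m)| \<le> exp (-\<alpha> |n - m|)\<close> for \<open>n \<noteq> m\<close>. In the direction \<open>\<Theta>\<^sub>j\<close> every diagonal entry is a shifted square, so its
  \<open>\<delta>\<close>-sublevel set lies in two intervals of length \<open>2\<surd>\<delta>\<close>, and each section of \<open>X\<^sub>N\<close> has
  measure at most \<open>4\<surd>\<delta> (2N+1)\<^bsup>b\<^esup> \<le> exp (- N\<^bsup>c\<^sub>1\<^esup>)\<close>.\<close>

section \<open>Invertibility of matrices indexed by a finite set\<close>

definition enum_mat :: "nat \<Rightarrow> (nat \<Rightarrow> 'a) \<Rightarrow> ('a \<Rightarrow> 'a \<Rightarrow> 'b) \<Rightarrow> 'b mat" where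
  "enum_mat m f M = mat m m (\<lambda>(i, j). M (f i) (f j))"

lemma sum_bij_betw_eq_index_mult_enum_mat:
  fixes M G :: "'a \<Rightarrow> 'a \<Rightarrow> 'b::comm_ring_1"
  assumes f: "bij_betw f {..<m} Q" and n: "n \<in> Q" and q: "q \<in> Q"
  shows "(\<Sum>k\<in>Q. M n k * G k q) =
    (enum_mat m f M * enum_mat m f G) $$ (inv_into {..<m} f n, inv_into {..<m} f q)"
proof -
  let ?g = "inv_into {..<m} f"
  have g: "?g n < m" "?g q < m" "f (?g n) = n" "f (?g q) = q"
    using bij_betw_apply[OF bij_betw_inv_into[OF f]] bij_betw_inv_into_right[OF f] n q by auto
  have "(\<Sum>k\<in>Q. M n k * G k q) = (\<Sum>j<m. M n (f j) * G (f j) q)"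
    using sum.reindex_bij_betw[OF f, of "\<lambda>k. M n k * G k q"] by simp
  then show ?thesis
    using g by (simp add: enum_mat_def scalar_prod_def lessThan_atLeast0)
qed

lemma sum_bij_betw_eq_index_mult_enum_mat_vec:
  fixes M :: "'a \<Rightarrow> 'a \<Rightarrow> 'b::comm_ring_1"
  assumes f: "bij_betw f {..<m} Q" and n: "n \<in> Q"
  shows "(\<Sum>k\<in>Q. M n k * x k) = (enum_mat m f M *\<^sub>v vec m (\<lambda>j. x (f j))) $ inv_into {..<m} f n"
proof -
  let ?g = "inv_into {..<m} f"
  have g: "?g n < m" "f (?g n) = n"
    using bij_betw_apply[OF bij_betw_inv_into[OF f]] bij_betw_inv_into_right[OF f] n by auto
  have "(\<Sum>k\<in>Q. M n k * x k) = (\<Sum>j<m. M n (f j) * x (f j))"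
    using sum.reindex_bij_betw[OF f, of "\<lambda>k. M n k * x k"] by simp
  then show ?thesis
    using g by (simp add: enum_mat_def scalar_prod_def lessThan_atLeast0)
qed

lemma det_enum_mat_neq_zero_if_injective:
  fixes M :: "'a \<Rightarrow> 'a \<Rightarrow> 'b::idom"
  assumes f: "bij_betw f {..<m} Q"
    and inj: "\<And>x. \<forall>n\<in>Q. (\<Sum>k\<in>Q. M n k * x k) = 0 \<Longrightarrow> \<forall>n\<in>Q. x n = 0"
  shows "det (enum_mat m f M) \<noteq> 0"
proof
  let ?A = "enum_mat m f M" and ?g = "inv_into {..<m} f"
  assume "det ?A = 0"
  then obtain v where v: "v \<in> carrier_vec m" "v \<noteq> 0\<^sub>v m" "?A *\<^sub>v v = 0\<^sub>v m"
    using det_0_iff_vec_prod_zero[of ?A m] by (auto simp: enum_mat_def)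
  define x where "x k = v $ ?g k" for k
  have gf: "?g (f i) = i" if "i < m" for i
    using bij_betw_inv_into_left[OF f] that by simp
  have v_eq: "vec m (\<lambda>j. x (f j)) = v"
    using v(1) gf by (auto simp: x_def)
  have "\<forall>n\<in>Q. (\<Sum>k\<in>Q. M n k * x k) = 0"
    using sum_bij_betw_eq_index_mult_enum_mat_vec[OF f, of _ M x] v(3)
      bij_betw_apply[OF bij_betw_inv_into[OF f]] by (simp add: v_eq)
  then have "\<forall>n\<in>Q. x n = 0" by (rule inj)
  then have "v = 0\<^sub>v m"
    using v(1) gf bij_betw_apply[OF f] by (intro eq_vecI) (auto simp: x_def, metis)
  with v(2) show False ..
qed

lemma invertible_on_if_injective:
  fixes M :: "lat \<Rightarrow> lat \<Rightarrow> complex"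
  assumes fin: "finite Q"
    and inj: "\<And>x. \<forall>n\<in>Q. (\<Sum>k\<in>Q. M n k * x k) = 0 \<Longrightarrow> \<forall>n\<in>Q. x n = 0"
  shows "invertible_on Q M"
proof -
  define m where "m = card Q"
  obtain f where f: "bij_betw f {..<m} Q"
    using ex_bij_betw_nat_finite[OF fin] by (auto simp: m_def lessThan_atLeast0)
  define g where "g = inv_into {..<m} f"
  have g: "g k < m" "f (g k) = k" if "k \<in> Q" for k
    using bij_betw_apply[OF bij_betw_inv_into[OF f]] bij_betw_inv_into_right[OF f] that
    by (auto simp: g_def)
  let ?A = "enum_mat m f M"
  have A: "?A \<in> carrier_mat m m" by (simp add: enum_mat_def)
  have "?A \<in> Units (ring_mat TYPE(complex) m ())"
    by (rule det_non_zero_imp_unit[OF A det_enum_mat_neq_zero_if_injective[OF f inj]])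
  then obtain B where B: "B \<in> carrier_mat m m" "?A * B = 1\<^sub>m m" "B * ?A = 1\<^sub>m m"
    using A by (auto simp: Units_def ring_mat_def)
  define G where "G p q = B $$ (g p, g q)" for p q
  have B_eq: "enum_mat m f G = B"
    using B(1) bij_betw_inv_into_left[OF f] by (auto simp: enum_mat_def G_def g_def)
  have "is_inverse_on Q M G"
    unfolding is_inverse_on_def
    using sum_bij_betw_eq_index_mult_enum_mat[OF f, of _ _ M G]
      sum_bij_betw_eq_index_mult_enum_mat[OF f, of _ _ G M] B g
    by (simp add: B_eq g_def[symmetric]) metis
  then show ?thesis
    unfolding invertible_on_def by blast
qed

lemma opnorm_le_card_sq_mult:
  assumes fin: "finite Q" and g: "g \<ge> 0" and G: "\<forall>n\<in>Q. \<forall>m\<in>Q. cmod (G n m) \<le> g"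
  shows "opnorm Q G \<le> real (card Q) ^ 2 * g"
  unfolding opnorm_def
proof (rule cSUP_least)
  show "{u. l2norm Q u \<le> 1} \<noteq> {}"
  proof -
    have "l2norm Q (\<lambda>_. 0) \<le> 1" by (simp add: l2norm_def)
    then show ?thesis by blast
  qed
  let ?K = "real (card Q)"
  fix u assume "u \<in> {u. l2norm Q u \<le> 1}"
  then have s1: "(\<Sum>m\<in>Q. (cmod (u m))\<^sup>2) \<le> 1" by (simp add: l2norm_def)
  have u1: "cmod (u m) \<le> 1" if m: "m \<in> Q" for m
  proof -
    have "(cmod (u m))\<^sup>2 \<le> (\<Sum>m\<in>Q. (cmod (u m))\<^sup>2)"
      using fin m by (intro member_le_sum) auto
    with s1 show ?thesis
      using abs_square_le_1[of "cmod (u m)"] by simp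
  qed
  have entry: "cmod (\<Sum>m\<in>Q. G n m * u m) \<le> ?K * g" if n: "n \<in> Q" for n
  proof -
    have "cmod (\<Sum>m\<in>Q. G n m * u m) \<le> (\<Sum>m\<in>Q. cmod (G n m) * cmod (u m))"
      by (rule order_trans[OF norm_sum]) (simp add: norm_mult)
    also have "\<dots> \<le> (\<Sum>m\<in>Q. g)"
    proof (rule sum_mono)
      fix m assume m: "m \<in> Q"
      show "cmod (G n m) * cmod (u m) \<le> g"
        using mult_mono[of "cmod (G n m)" g "cmod (u m)" 1] G n m u1[OF m] g by simp
    qed
    finally show ?thesis by simp
  qed
  have "(\<Sum>n\<in>Q. (cmod (\<Sum>m\<in>Q. G n m * u m))\<^sup>2) \<le> (\<Sum>n\<in>Q. (?K * g)\<^sup>2)"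
    using entry by (intro sum_mono power_mono) auto
  also have "\<dots> = ?K * (?K * g)\<^sup>2" by simp
  also have "\<dots> \<le> (?K ^ 2 * g)\<^sup>2"
  proof (cases "card Q = 0")
    case False
    then have "?K * (?K * g)\<^sup>2 \<le> ?K * ?K * (?K * g)\<^sup>2" by (intro mult_right_mono) auto
    then show ?thesis by (simp add: power2_eq_square algebra_simps)
  qed simp
  finally have "l2norm Q (\<lambda>n. \<Sum>m\<in>Q. G n m * u m) \<le> sqrt ((?K ^ 2 * g)\<^sup>2)"
    unfolding l2norm_def by (rule real_sqrt_le_mono)
  then show "l2norm Q (\<lambda>n. \<Sum>m\<in>Q. G n m * u m) \<le> ?K ^ 2 * g" using g by simp
qed

section \<open>Diagonally dominant perturbations\<close>

definition diag_plus :: "real \<Rightarrow> ('a \<Rightarrow> 'a \<Rightarrow> complex) \<Rightarrow> ('a \<Rightarrow> real) \<Rightarrow> 'a \<Rightarrow> 'a \<Rightarrow> complex" where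
  "diag_plus \<epsilon> A D n k = complex_of_real \<epsilon> * A n k + (if n = k then complex_of_real (D n) else 0)"

lemma sum_diag_plus_mult:
  assumes "finite Q" and "n \<in> Q"
  shows "(\<Sum>k\<in>Q. diag_plus \<epsilon> A D n k * x k) =
    complex_of_real \<epsilon> * (\<Sum>k\<in>Q. A n k * x k) + complex_of_real (D n) * x n"
proof -
  have "(\<Sum>k\<in>Q. diag_plus \<epsilon> A D n k * x k) = (\<Sum>k\<in>Q. complex_of_real \<epsilon> * (A n k * x k) +
      (if n = k then complex_of_real (D n) * x n else 0))"
    by (intro sum.cong) (auto simp: diag_plus_def algebra_simps)
  also have "\<dots> = complex_of_real \<epsilon> * (\<Sum>k\<in>Q. A n k * x k) + complex_of_real (D n) * x n"
    using assms by (simp add: sum.distrib sum_distrib_left)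
  finally show ?thesis .
qed

lemma diag_plus_row_estimate:
  fixes A :: "'a \<Rightarrow> 'a \<Rightarrow> complex" and D w :: "'a \<Rightarrow> real" and x z :: "'a \<Rightarrow> complex"
  assumes fin: "finite Q" and n: "n \<in> Q" and D: "\<delta> \<le> \<bar>D n\<bar>" and eps: "\<epsilon> \<ge> 0"
    and w: "w n \<ge> 0" and wA: "\<forall>k\<in>Q. w n * cmod (A n k) \<le> w k"
    and Y: "\<forall>k\<in>Q. w k * cmod (x k) \<le> Y"
    and eq: "(\<Sum>k\<in>Q. diag_plus \<epsilon> A D n k * x k) = z n"
  shows "\<delta> * (w n * cmod (x n)) \<le> w n * cmod (z n) + \<epsilon> * real (card Q) * Y"
proof -
  define S where "S = (\<Sum>k\<in>Q. A n k * x k)"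
  have Dx: "complex_of_real (D n) * x n = z n - complex_of_real \<epsilon> * S"
    using eq sum_diag_plus_mult[OF fin n, of \<epsilon> A D x] by (simp add: S_def algebra_simps)
  have "w n * cmod S \<le> w n * (\<Sum>k\<in>Q. cmod (A n k) * cmod (x k))"
    unfolding S_def using w
    by (intro mult_left_mono) (auto intro: order_trans[OF norm_sum] simp: norm_mult)
  also have "\<dots> = (\<Sum>k\<in>Q. (w n * cmod (A n k)) * cmod (x k))"
    by (simp add: sum_distrib_left mult.assoc)
  also have "\<dots> \<le> (\<Sum>k\<in>Q. w k * cmod (x k))"
    using wA by (intro sum_mono mult_right_mono) auto
  also have "\<dots> \<le> real (card Q) * Y"
    using sum_mono[of Q _ "\<lambda>_. Y"] Y by simp
  finally have S: "w n * cmod S \<le> real (card Q) * Y" .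
  have "\<bar>D n\<bar> * cmod (x n) = cmod (z n - complex_of_real \<epsilon> * S)"
    by (simp add: Dx[symmetric] norm_mult)
  also have "\<dots> \<le> cmod (z n) + \<epsilon> * cmod S"
    using norm_triangle_ineq4[of "z n" "complex_of_real \<epsilon> * S"] eps by (simp add: norm_mult)
  finally have "w n * (\<bar>D n\<bar> * cmod (x n)) \<le> w n * (cmod (z n) + \<epsilon> * cmod S)"
    using w by (rule mult_left_mono)
  also have "\<dots> = w n * cmod (z n) + \<epsilon> * (w n * cmod S)"
    by (simp add: algebra_simps)
  also have "\<dots> \<le> w n * cmod (z n) + \<epsilon> * (real (card Q) * Y)"
    using S eps by (intro add_left_mono mult_left_mono)
  finally have "\<bar>D n\<bar> * (w n * cmod (x n)) \<le> w n * cmod (z n) + \<epsilon> * real (card Q) * Y"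
    by (simp add: ac_simps)
  moreover have "\<delta> * (w n * cmod (x n)) \<le> \<bar>D n\<bar> * (w n * cmod (x n))"
    using D w by (intro mult_right_mono) auto
  ultimately show ?thesis by linarith
qed

lemma diag_plus_weighted_max_estimate:
  fixes A :: "'a \<Rightarrow> 'a \<Rightarrow> complex" and D w :: "'a \<Rightarrow> real" and x z :: "'a \<Rightarrow> complex"
  assumes fin: "finite Q" and \<delta>: "\<delta> > 0" and eps: "\<epsilon> \<ge> 0"
    and small: "\<epsilon> * real (card Q) \<le> \<delta> / 2"
    and D: "\<forall>n\<in>Q. \<delta> \<le> \<bar>D n\<bar>" and w: "\<forall>n\<in>Q. w n \<ge> 0"
    and wA: "\<forall>n\<in>Q. \<forall>k\<in>Q. w n * cmod (A n k) \<le> w k"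
    and Z: "\<forall>n\<in>Q. w n * cmod (z n) \<le> Z"
    and eq: "\<forall>n\<in>Q. (\<Sum>k\<in>Q. diag_plus \<epsilon> A D n k * x k) = z n"
    and n: "n \<in> Q"
  shows "w n * cmod (x n) \<le> 2 * Z / \<delta>"
proof -
  define Y where "Y = Max ((\<lambda>k. w k * cmod (x k)) ` Q)"
  have Y: "\<forall>k\<in>Q. w k * cmod (x k) \<le> Y"
    unfolding Y_def using fin by auto
  have "Y \<in> (\<lambda>k. w k * cmod (x k)) ` Q"
    unfolding Y_def using fin n by (intro Max_in) auto
  then obtain k0 where k0: "k0 \<in> Q" "Y = w k0 * cmod (x k0)" by blast
  have "Y \<ge> 0" using k0 w by simp
  have "\<delta> * Y \<le> w k0 * cmod (z k0) + \<epsilon> * real (card Q) * Y"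
    using diag_plus_row_estimate[where z = z and A = A, OF fin k0(1) bspec[OF D k0(1)] eps
        bspec[OF w k0(1)] bspec[OF wA k0(1)] Y bspec[OF eq k0(1)]] k0(2)
    by simp
  also have "\<dots> \<le> Z + \<delta> / 2 * Y"
    using Z k0(1) small \<open>Y \<ge> 0\<close> by (intro add_mono mult_right_mono) auto
  finally have "Y \<le> 2 * Z / \<delta>"
    using \<delta> by (simp add: field_simps)
  with Y n show ?thesis by fastforce
qed

section \<open>The lattice, the sup norm and the cube\<close>

lemma finite_idx: "finite (idx d bs)"
proof -
  have "idx d bs = Sigma {..<d} (\<lambda>i. {..<bs i})" unfolding idx_def by auto
  then show ?thesis by simp
qed

lemma abs_le_supnorm: "p \<in> idx d bs \<Longrightarrow> \<bar>k p\<bar> \<le> supnorm d bs k"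
  unfolding supnorm_def using finite_idx by auto

lemma supnorm_nonneg: "idx d bs \<noteq> {} \<Longrightarrow> 0 \<le> supnorm d bs k"
  using abs_le_supnorm[of _ d bs k] by fastforce

lemma supnorm_lat_diff_self: "idx d bs \<noteq> {} \<Longrightarrow> supnorm d bs (lat_diff n n) = 0"
  unfolding supnorm_def lat_diff_def using finite_idx by simp

lemma supnorm_lat_diff_triangle:
  assumes "idx d bs \<noteq> {}"
  shows "supnorm d bs (lat_diff a c) \<le> supnorm d bs (lat_diff a b) + supnorm d bs (lat_diff b c)"
proof -
  have "\<bar>lat_diff a c p\<bar> \<le> supnorm d bs (lat_diff a b) + supnorm d bs (lat_diff b c)"
    if p: "p \<in> idx d bs" for p
    using abs_le_supnorm[OF p, of "lat_diff a b"] abs_le_supnorm[OF p, of "lat_diff b c"]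
    by (simp add: lat_diff_def)
  then show ?thesis
    unfolding supnorm_def[of d bs "lat_diff a c"] using assms finite_idx by simp
qed

lemma lat_diff_in_lattice:
  "a \<in> Defs.lattice d bs \<Longrightarrow> b \<in> Defs.lattice d bs \<Longrightarrow> lat_diff a b \<in> Defs.lattice d bs"
  unfolding Defs.lattice_def lat_diff_def by auto

lemma admissible_V_decay:
  assumes "admissible_V d bs \<rho> Vh" and "a \<in> Defs.lattice d bs" and "b \<in> Defs.lattice d bs"
  shows "cmod (Vh (lat_diff a b)) \<le> exp (- \<rho> * real_of_int (supnorm d bs (lat_diff a b)))"
  using assms lat_diff_in_lattice unfolding admissible_V_def by blast

lemma inj_on_restrict_cube: "inj_on (\<lambda>k. restrict k (idx d bs)) (cube d bs N)"
proof
  fix a b assume a: "a \<in> cube d bs N" and b: "b \<in> cube d bs N"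
    and eq: "restrict a (idx d bs) = restrict b (idx d bs)"
  show "a = b"
  proof
    fix p show "a p = b p"
      using a b fun_cong[OF eq, of p]
      by (cases "p \<in> idx d bs"; cases p) (auto simp: cube_def Defs.lattice_def)
  qed
qed

lemma restrict_cube_subset:
  "(\<lambda>k. restrict k (idx d bs)) ` cube d bs N \<subseteq> PiE (idx d bs) (\<lambda>_. {- int N..int N})"
  unfolding cube_def by (auto simp: abs_le_iff)

lemma finite_cube: "finite (cube d bs N)"
  using finite_imageD[OF finite_subset[OF restrict_cube_subset] inj_on_restrict_cube] finite_idx
  by (simp add: finite_PiE)

lemma card_cube_le: "real (card (cube d bs N)) \<le> (2 * real N + 1) ^ card (idx d bs)"
proof -
  have "card (cube d bs N) \<le> card (PiE (idx d bs) (\<lambda>_. {- int N..int N}))"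
    using finite_idx by (intro card_inj_on_le[OF inj_on_restrict_cube restrict_cube_subset])
      (simp add: finite_PiE)
  also have "\<dots> = (2 * N + 1) ^ card (idx d bs)"
    using finite_idx by (simp add: card_PiE nat_add_distrib nat_mult_distrib)
  finally show ?thesis
    by (metis (mono_tags) of_nat_le_iff of_nat_1 of_nat_add of_nat_mult of_nat_numeral of_nat_power)
qed

lemma elem_regions_subset_cube: "Q \<in> elem_regions d bs N \<Longrightarrow> Q \<subseteq> cube d bs N"
  unfolding elem_regions_def by auto

section \<open>Small divisors\<close>

lemma quadratic_sublevel_subset:
  fixes a c \<delta> :: real
  assumes "\<delta> > 0"
  shows "{t. \<bar>(t + a)\<^sup>2 - c\<bar> < \<delta>} \<subseteq>
    {sqrt (max c 0) - sqrt \<delta> - a <..< sqrt (max c 0) + sqrt \<delta> - a} \<union>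
    {- sqrt (max c 0) - sqrt \<delta> - a <..< - sqrt (max c 0) + sqrt \<delta> - a}"
proof
  fix t assume "t \<in> {t. \<bar>(t + a)\<^sup>2 - c\<bar> < \<delta>}"
  then have h: "\<bar>(t + a)\<^sup>2 - c\<bar> < \<delta>" by simp
  define u where "u = t + a"
  define s where "s = sqrt (max c 0)"
  have "\<bar>\<bar>u\<bar> - s\<bar> < sqrt \<delta>"
  proof (cases "c \<ge> 0")
    case True
    show ?thesis
    proof (rule ccontr)
      assume "\<not> \<bar>\<bar>u\<bar> - s\<bar> < sqrt \<delta>"
      moreover have "s \<ge> 0" by (simp add: s_def)
      ultimately have "sqrt \<delta> * sqrt \<delta> \<le> \<bar>\<bar>u\<bar> - s\<bar> * (\<bar>u\<bar> + s)"
        using assms by (intro mult_mono) auto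
      also have "\<dots> = \<bar>(\<bar>u\<bar> - s) * (\<bar>u\<bar> + s)\<bar>"
        using \<open>s \<ge> 0\<close> by (simp add: abs_mult)
      also have "(\<bar>u\<bar> - s) * (\<bar>u\<bar> + s) = u\<^sup>2 - c"
        using True by (simp add: s_def algebra_simps power2_eq_square)
      finally show False
        using h assms by (simp add: u_def)
    qed
  next
    case False
    then have "u\<^sup>2 < \<delta>" using h by (auto simp: u_def)
    then show ?thesis
      using False real_sqrt_less_mono[of "u\<^sup>2" \<delta>] by (simp add: s_def)
  qed
  then show "t \<in> {s - sqrt \<delta> - a <..< s + sqrt \<delta> - a} \<union> {- s - sqrt \<delta> - a <..< - s + sqrt \<delta> - a}"
    by (cases "u \<ge> 0") (auto simp: u_def)
qed

lemma emeasure_quadratic_sublevel_le: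
  fixes a c \<delta> :: real
  assumes "\<delta> > 0"
  shows "emeasure lborel {t. \<bar>(t + a)\<^sup>2 - c\<bar> < \<delta>} \<le> ennreal (4 * sqrt \<delta>)"
proof -
  let ?s = "sqrt (max c 0)"
  have "emeasure lborel {t. \<bar>(t + a)\<^sup>2 - c\<bar> < \<delta>}
      \<le> emeasure lborel ({?s - sqrt \<delta> - a <..< ?s + sqrt \<delta> - a} \<union>
          {- ?s - sqrt \<delta> - a <..< - ?s + sqrt \<delta> - a})"
    using quadratic_sublevel_subset[OF assms] by (intro emeasure_mono) auto
  also have "\<dots> \<le> ennreal (2 * sqrt \<delta>) + ennreal (2 * sqrt \<delta>)"
    using assms by (intro order_trans[OF emeasure_subadditive] add_mono) auto
  also have "\<dots> = ennreal (4 * sqrt \<delta>)"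
    using assms by (simp flip: ennreal_plus)
  finally show ?thesis .
qed

definition diag_entry :: "nat \<Rightarrow> (nat \<Rightarrow> nat) \<Rightarrow> ((nat \<times> nat) \<Rightarrow> real) \<Rightarrow> real \<Rightarrow>
    (nat \<Rightarrow> real) \<Rightarrow> lat \<Rightarrow> real" where
  "diag_entry d bs \<omega> E \<theta> n = (\<Sum>i<d. (\<theta> i + (\<Sum>j<bs i. real_of_int (n (i, j)) * \<omega> (i, j)))\<^sup>2) - E"

lemma hmat_eq_diag_plus:
  "hmat d bs Vh \<epsilon> \<omega> \<theta> E = diag_plus \<epsilon> (\<lambda>n k. Vh (lat_diff n k)) (diag_entry d bs \<omega> E \<theta>)"
  by (simp add: fun_eq_iff hmat_def diag_plus_def diag_entry_def)

lemma diag_entry_fun_upd: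
  assumes "j < d"
  shows "diag_entry d bs \<omega> E (\<theta>(j := t)) n =
    (t + (\<Sum>l<bs j. real_of_int (n (j, l)) * \<omega> (j, l)))\<^sup>2 -
    (E - (\<Sum>i\<in>{..<d} - {j}. (\<theta> i + (\<Sum>l<bs i. real_of_int (n (i, l)) * \<omega> (i, l)))\<^sup>2))"
proof -
  have "(\<Sum>i\<in>{..<d} - {j}. ((\<theta>(j := t)) i + (\<Sum>l<bs i. real_of_int (n (i, l)) * \<omega> (i, l)))\<^sup>2)
     = (\<Sum>i\<in>{..<d} - {j}. (\<theta> i + (\<Sum>l<bs i. real_of_int (n (i, l)) * \<omega> (i, l)))\<^sup>2)"
    by (intro sum.cong) auto
  then show ?thesis
    using assms by (simp add: diag_entry_def sum.remove[of "{..<d}" j])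
qed

text \<open>The exceptional set \<open>X\<^sub>N\<close> of the theorem, for \<open>\<delta> = exp (-3 N\<^bsup>c\<^sub>1\<^esup>)\<close>.\<close>

definition small_divisor_set :: "nat \<Rightarrow> (nat \<Rightarrow> nat) \<Rightarrow> ((nat \<times> nat) \<Rightarrow> real) \<Rightarrow> real \<Rightarrow>
    nat \<Rightarrow> real \<Rightarrow> (nat \<Rightarrow> real) set" where
  "small_divisor_set d bs \<omega> E N \<delta> = {\<theta> \<in> Rd d. \<exists>n\<in>cube d bs N. \<bar>diag_entry d bs \<omega> E \<theta> n\<bar> < \<delta>}"

lemma slice_small_divisor_set:
  assumes "j < d" and "\<theta> \<in> Rd d"
  shows "slice (small_divisor_set d bs \<omega> E N \<delta>) j \<theta> =
    (\<Union>n\<in>cube d bs N. {t. \<bar>(t + (\<Sum>l<bs j. real_of_int (n (j, l)) * \<omega> (j, l)))\<^sup>2 -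
       (E - (\<Sum>i\<in>{..<d} - {j}. (\<theta> i + (\<Sum>l<bs i. real_of_int (n (i, l)) * \<omega> (i, l)))\<^sup>2))\<bar> < \<delta>})"
proof -
  have "\<theta>(j := t) \<in> Rd d" for t
    using assms unfolding Rd_def by auto
  then show ?thesis
    unfolding slice_def small_divisor_set_def using diag_entry_fun_upd[OF assms(1)] by auto
qed

lemma slice_small_divisor_set_open:
  assumes "j < d" and "\<theta> \<in> Rd d"
  shows "open (slice (small_divisor_set d bs \<omega> E N \<delta>) j \<theta>)"
  unfolding slice_small_divisor_set[OF assms]
  by (intro open_UN ballI open_Collect_less continuous_intros)

lemma emeasure_slice_small_divisor_set_le:
  assumes "j < d" and "\<theta> \<in> Rd d" and "\<delta> > 0"
  shows "emeasure lebesgue (slice (small_divisor_set d bs \<omega> E N \<delta>) j \<theta>)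
    \<le> ennreal (real (card (cube d bs N)) * (4 * sqrt \<delta>))"
proof -
  let ?S = "slice (small_divisor_set d bs \<omega> E N \<delta>) j \<theta>"
  have "?S \<in> sets borel"
    using slice_small_divisor_set_open[OF assms(1,2)] by simp
  then have "emeasure lebesgue ?S = emeasure lborel ?S" by simp
  also have "\<dots> \<le> (\<Sum>n\<in>cube d bs N. ennreal (4 * sqrt \<delta>))"
    unfolding slice_small_divisor_set[OF assms(1,2)] using finite_cube
    by (intro order_trans[OF emeasure_subadditive_finite] sum_mono
        emeasure_quadratic_sublevel_le assms(3))
      (auto intro!: borel_open open_Collect_less continuous_intros)
  also have "\<dots> = ennreal (real (card (cube d bs N)) * (4 * sqrt \<delta>))"
    using assms(3) by (simp add: ennreal_mult ennreal_of_nat_eq_real_of_nat)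
  finally show ?thesis .
qed

section \<open>Green's functions away from the small divisors\<close>

lemma exp_weight_mult_decay_le:
  assumes "idx d bs \<noteq> {}" and "0 \<le> \<alpha>" and "\<alpha> \<le> \<rho>"
  shows "exp (\<alpha> * real_of_int (supnorm d bs (lat_diff a m))) *
      exp (- \<rho> * real_of_int (supnorm d bs (lat_diff a k)))
    \<le> exp (\<alpha> * real_of_int (supnorm d bs (lat_diff k m)))"
proof -
  let ?s = "\<lambda>x y. real_of_int (supnorm d bs (lat_diff x y))"
  have "\<alpha> * ?s a m \<le> \<alpha> * ?s a k + \<alpha> * ?s k m"
    using supnorm_lat_diff_triangle[OF assms(1), of a m k] assms(2)
    by (simp flip: distrib_left add: mult_left_mono)
  moreover have "\<alpha> * ?s a k \<le> \<rho> * ?s a k"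
    using supnorm_nonneg[OF assms(1)] assms(3) by (intro mult_right_mono) auto
  ultimately show ?thesis
    by (simp flip: exp_add)
qed

lemma hmat_invertible_on:
  assumes ne: "idx d bs \<noteq> {}" and QL: "Q \<subseteq> Defs.lattice d bs" and fin: "finite Q"
    and adm: "admissible_V d bs \<rho> Vh" and \<rho>: "0 \<le> \<rho>" and eps: "0 \<le> \<epsilon>" and \<delta>: "0 < \<delta>"
    and small: "\<epsilon> * real (card Q) \<le> \<delta> / 2"
    and D: "\<forall>n\<in>Q. \<delta> \<le> \<bar>diag_entry d bs \<omega> E \<theta> n\<bar>"
  shows "invertible_on Q (hmat d bs Vh \<epsilon> \<omega> \<theta> E)"
proof (rule invertible_on_if_injective[OF fin])
  fix x assume "\<forall>n\<in>Q. (\<Sum>k\<in>Q. hmat d bs Vh \<epsilon> \<omega> \<theta> E n k * x k) = 0"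
  then have x: "\<forall>n\<in>Q.
      (\<Sum>k\<in>Q. diag_plus \<epsilon> (\<lambda>n k. Vh (lat_diff n k)) (diag_entry d bs \<omega> E \<theta>) n k * x k) = 0"
    by (simp add: hmat_eq_diag_plus)
  have A: "\<forall>n\<in>Q. \<forall>k\<in>Q. 1 * cmod (Vh (lat_diff n k)) \<le> 1"
  proof (intro ballI)
    fix n k assume "n \<in> Q" "k \<in> Q"
    then have "cmod (Vh (lat_diff n k)) \<le> exp (- \<rho> * real_of_int (supnorm d bs (lat_diff n k)))"
      using admissible_V_decay[OF adm] QL by blast
    also have "\<dots> \<le> 1"
      using supnorm_nonneg[OF ne, of "lat_diff n k"] \<rho> by (simp add: mult_nonneg_nonneg)
    finally show "1 * cmod (Vh (lat_diff n k)) \<le> 1" by simp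
  qed
  have "1 * cmod (x n) \<le> 2 * 0 / \<delta>" if "n \<in> Q" for n
    by (rule diag_plus_weighted_max_estimate[where w = "\<lambda>_. 1" and z = "\<lambda>_. 0",
          OF fin \<delta> eps small D _ A _ x that]) simp_all
  then show "\<forall>n\<in>Q. x n = 0" by simp
qed

lemma green_weighted_column_bound:
  assumes ne: "idx d bs \<noteq> {}" and QL: "Q \<subseteq> Defs.lattice d bs" and fin: "finite Q"
    and adm: "admissible_V d bs \<rho> Vh" and \<alpha>: "0 \<le> \<alpha>" "\<alpha> \<le> \<rho>"
    and eps: "0 \<le> \<epsilon>" and \<delta>: "0 < \<delta>" and small: "\<epsilon> * real (card Q) \<le> \<delta> / 2"
    and D: "\<forall>n\<in>Q. \<delta> \<le> \<bar>diag_entry d bs \<omega> E \<theta> n\<bar>"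
    and G: "is_inverse_on Q (hmat d bs Vh \<epsilon> \<omega> \<theta> E) G" and n: "n \<in> Q" and m: "m \<in> Q"
  shows "exp (\<alpha> * real_of_int (supnorm d bs (lat_diff n m))) * cmod (G n m) \<le> 2 / \<delta>"
    and "n \<noteq> m \<Longrightarrow> \<delta> * (exp (\<alpha> * real_of_int (supnorm d bs (lat_diff n m))) * cmod (G n m))
           \<le> \<epsilon> * real (card Q) * (2 / \<delta>)"
proof -
  define w where "w k = exp (\<alpha> * real_of_int (supnorm d bs (lat_diff k m)))" for k
  let ?A = "\<lambda>n k. Vh (lat_diff n k)"
  let ?z = "\<lambda>k. if k = m then 1 else 0 :: complex"
  have w: "\<forall>k\<in>Q. 0 \<le> w k" by (simp add: w_def)
  have wA: "\<forall>a\<in>Q. \<forall>k\<in>Q. w a * cmod (?A a k) \<le> w k"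
  proof (intro ballI)
    fix a k assume "a \<in> Q" "k \<in> Q"
    then have "w a * cmod (?A a k) \<le> w a * exp (- \<rho> * real_of_int (supnorm d bs (lat_diff a k)))"
      using admissible_V_decay[OF adm] QL by (intro mult_left_mono) (auto simp: w_def)
    also have "\<dots> \<le> w k"
      unfolding w_def by (rule exp_weight_mult_decay_le[OF ne \<alpha>])
    finally show "w a * cmod (?A a k) \<le> w k" .
  qed
  have z: "\<forall>k\<in>Q. w k * cmod (?z k) \<le> 1"
    by (simp add: w_def supnorm_lat_diff_self[OF ne])
  have eq: "\<forall>k\<in>Q. (\<Sum>j\<in>Q. diag_plus \<epsilon> ?A (diag_entry d bs \<omega> E \<theta>) k j * G j m) = ?z k"
    using G m unfolding is_inverse_on_def hmat_eq_diag_plus by simp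
  have col: "\<forall>k\<in>Q. w k * cmod (G k m) \<le> 2 * 1 / \<delta>"
    using diag_plus_weighted_max_estimate[where z = ?z and A = ?A, OF fin \<delta> eps small D w wA z eq]
    by blast
  then show "exp (\<alpha> * real_of_int (supnorm d bs (lat_diff n m))) * cmod (G n m) \<le> 2 / \<delta>"
    using n by (simp add: w_def)
  assume "n \<noteq> m"
  then show "\<delta> * (exp (\<alpha> * real_of_int (supnorm d bs (lat_diff n m))) * cmod (G n m))
      \<le> \<epsilon> * real (card Q) * (2 / \<delta>)"
    using diag_plus_row_estimate[where z = ?z and A = ?A, OF fin n bspec[OF D n] eps
        bspec[OF w n] bspec[OF wA n] col bspec[OF eq n]]
    by (simp add: w_def)
qed

lemma green_bounds:
  assumes ne: "idx d bs \<noteq> {}" and QL: "Q \<subseteq> Defs.lattice d bs" and fin: "finite Q"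
    and adm: "admissible_V d bs \<rho> Vh" and \<rho>: "0 < \<rho>" and eps: "0 \<le> \<epsilon>"
    and \<delta>: "0 < \<delta>" "\<delta> \<le> 1" and D: "\<forall>n\<in>Q. \<delta> \<le> \<bar>diag_entry d bs \<omega> E \<theta> n\<bar>"
    and K: "real (card Q) \<le> K" and dec: "2 * \<epsilon> * K \<le> \<delta>\<^sup>2" and R: "K\<^sup>2 * (2 / \<delta>) \<le> R"
  shows "invertible_on Q (hmat d bs Vh \<epsilon> \<omega> \<theta> E)"
    and "opnorm Q (green d bs Vh \<epsilon> \<omega> Q E \<theta>) \<le> R"
    and "n \<in> Q \<Longrightarrow> n' \<in> Q \<Longrightarrow> n \<noteq> n' \<Longrightarrow> cmod (green d bs Vh \<epsilon> \<omega> Q E \<theta> n n')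
           \<le> exp (- (4 * \<rho> / 5) * real_of_int (supnorm d bs (lat_diff n n')))"
proof -
  let ?G = "green d bs Vh \<epsilon> \<omega> Q E \<theta>"
  have decQ: "2 * (\<epsilon> * real (card Q)) \<le> \<delta>\<^sup>2"
    using mult_left_mono[OF K, of "2 * \<epsilon>"] eps dec by simp
  also have "\<dots> \<le> \<delta>"
    using \<delta> by (simp add: power2_eq_square mult_left_le)
  finally have small: "\<epsilon> * real (card Q) \<le> \<delta> / 2" by simp
  show inv: "invertible_on Q (hmat d bs Vh \<epsilon> \<omega> \<theta> E)"
    using hmat_invertible_on[OF ne QL fin adm _ eps \<delta>(1) small D] \<rho> by simp
  then have G: "is_inverse_on Q (hmat d bs Vh \<epsilon> \<omega> \<theta> E) ?G"
    unfolding invertible_on_def green_def inv_on_def by (rule someI_ex)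
  note column = green_weighted_column_bound[OF ne QL fin adm _ _ eps \<delta>(1) small D G]
  have "opnorm Q ?G \<le> real (card Q) ^ 2 * (2 / \<delta>)"
    using column(1)[of 0] \<delta> \<rho> by (intro opnorm_le_card_sq_mult[OF fin]) auto
  also have "\<dots> \<le> K\<^sup>2 * (2 / \<delta>)"
    using K \<delta> by (intro mult_right_mono power_mono) auto
  finally show "opnorm Q ?G \<le> R" using R by simp
  assume n: "n \<in> Q" and n': "n' \<in> Q" and "n \<noteq> n'"
  define w where "w = exp (4 * \<rho> / 5 * real_of_int (supnorm d bs (lat_diff n n')))"
  have "\<delta> * (w * cmod (?G n n')) \<le> \<epsilon> * real (card Q) * (2 / \<delta>)"
    unfolding w_def using column(2)[where \<alpha> = "4 * \<rho> / 5", OF _ _ n n' \<open>n \<noteq> n'\<close>] \<rho> by simp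
  also have "\<dots> = 2 * (\<epsilon> * real (card Q)) / \<delta>" by simp
  also have "\<dots> \<le> \<delta>\<^sup>2 / \<delta>"
    using decQ \<delta> by (intro divide_right_mono) auto
  also have "\<dots> = \<delta> * 1"
    by (simp add: power2_eq_square)
  finally have "w * cmod (?G n n') \<le> 1"
    using \<delta> by (simp only: mult_le_cancel_left_pos)
  then show "cmod (?G n n') \<le> exp (- (4 * \<rho> / 5) * real_of_int (supnorm d bs (lat_diff n n')))"
    by (simp add: w_def exp_minus field_simps)
qed

section \<open>The initial scale\<close>

lemma le_exp_neg_powr_of_le_abs_ln_powr:
  fixes \<epsilon> c x :: real
  assumes "0 < \<epsilon>" "\<epsilon> < 1" "0 < c" "0 \<le> x" "x \<le> \<bar>ln \<epsilon>\<bar> powr (1 / (2 * c))"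
  shows "\<epsilon> \<le> exp (- (x powr (2 * c)))"
proof -
  have "x powr (2 * c) \<le> (\<bar>ln \<epsilon>\<bar> powr (1 / (2 * c))) powr (2 * c)"
    using assms by (intro powr_mono2) auto
  also have "\<dots> = - ln \<epsilon>"
    using assms by (simp add: powr_powr)
  finally have "ln \<epsilon> \<le> - (x powr (2 * c))" by simp
  then show ?thesis
    using assms(1) by (metis exp_le_cancel_iff exp_ln)
qed

lemma exp_scale_inequalities:
  fixes y P K \<epsilon> :: real
  assumes y: "20 \<le> y" and P: "1 \<le> P" "4 * P\<^sup>2 \<le> exp (y / 2)" and K: "0 \<le> K" "K \<le> P"
    and \<epsilon>: "\<epsilon> \<le> exp (- (y\<^sup>2))"
  shows "K * (4 * sqrt (exp (- 3 * y))) \<le> exp (- y)"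
    and "2 * \<epsilon> * K \<le> (exp (- 3 * y))\<^sup>2"
    and "K\<^sup>2 * (2 / exp (- 3 * y)) \<le> exp (y\<^sup>2)"
proof -
  have yy: "y / 2 + 6 * y \<le> y\<^sup>2"
    using y mult_right_mono[OF y, of y] by (simp add: power2_eq_square)
  have "4 * P \<le> 4 * (P * P)"
    using P mult_left_mono[of 1 P P] by simp
  also have "\<dots> \<le> exp (y / 2)"
    using P(2) by (simp add: power2_eq_square)
  finally have P4: "4 * P \<le> exp (y / 2)" .
  have "exp (- 3 * y) = (exp (- 3 * y / 2))\<^sup>2"
    by (simp add: power2_eq_square exp_add[symmetric])
  then have "K * (4 * sqrt (exp (- 3 * y))) = 4 * K * exp (- 3 * y / 2)"
    by simp
  also have "\<dots> \<le> 4 * P * exp (- 3 * y / 2)"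
    using K by (intro mult_right_mono) auto
  also have "\<dots> \<le> exp (y / 2) * exp (- 3 * y / 2)"
    using P4 by (intro mult_right_mono) auto
  finally show "K * (4 * sqrt (exp (- 3 * y))) \<le> exp (- y)"
    by (simp add: exp_add[symmetric])
  have "2 * \<epsilon> * K \<le> exp (- (y\<^sup>2)) * (2 * P)"
    using \<epsilon> K mult_mono[OF \<epsilon> K(2)] exp_ge_zero[of "- (y\<^sup>2)"] by auto
  also have "\<dots> \<le> exp (- (y\<^sup>2)) * exp (y / 2)"
    using P4 P by (intro mult_left_mono) auto
  also have "\<dots> \<le> (exp (- 3 * y))\<^sup>2"
    using yy by (simp add: exp_add[symmetric] power2_eq_square)
  finally show "2 * \<epsilon> * K \<le> (exp (- 3 * y))\<^sup>2" .
  have "K\<^sup>2 * (2 / exp (- 3 * y)) = 2 * K\<^sup>2 * exp (3 * y)"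
    by (simp add: exp_minus divide_inverse)
  also have "\<dots> \<le> (4 * P\<^sup>2) * exp (3 * y)"
  proof (rule mult_right_mono)
    show "2 * K\<^sup>2 \<le> 4 * P\<^sup>2"
      using power_mono[OF K(2) K(1), of 2] zero_le_power2[of P] by linarith
  qed simp
  also have "\<dots> \<le> exp (y / 2) * exp (3 * y)"
    using P(2) by (intro mult_right_mono) auto
  also have "\<dots> \<le> exp (y\<^sup>2)"
    using yy y by (simp add: exp_add[symmetric])
  finally show "K\<^sup>2 * (2 / exp (- 3 * y)) \<le> exp (y\<^sup>2)" .
qed

lemma eventually_log_bounds:
  fixes c :: real and B :: nat
  assumes "0 < c"
  shows "\<exists>N\<^sub>0>0. \<forall>x\<ge>N\<^sub>0. ln 4 + 2 * real B * ln (2 * x + 1) \<le> x powr c / 2 \<and> 20 \<le> x powr c"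
proof -
  have "eventually (\<lambda>x. ln 4 + 2 * real B * ln (2 * x + 1) \<le> x powr c / 2) at_top"
    using assms by real_asymp
  moreover have "eventually (\<lambda>x. 20 \<le> x powr c) at_top"
    using assms by real_asymp
  ultimately have "eventually (\<lambda>x.
      ln 4 + 2 * real B * ln (2 * x + 1) \<le> x powr c / 2 \<and> 20 \<le> x powr c) at_top"
    by (rule eventually_conj)
  then obtain N where "\<forall>x\<ge>N. ln 4 + 2 * real B * ln (2 * x + 1) \<le> x powr c / 2 \<and> 20 \<le> x powr c"
    by (auto simp: eventually_at_top_linorder)
  then show ?thesis by (intro exI[of _ "max N 1"]) auto
qed

lemma initial_scale_parameters:
  fixes c :: real and B :: nat
  assumes c: "0 < c" "c \<le> 1 / 4"
  shows "\<exists>N\<^sub>0>0. \<forall>x \<epsilon> K. N\<^sub>0 \<le> x \<and> 0 < \<epsilon> \<and> \<epsilon> < 1 \<and> x \<le> \<bar>ln \<epsilon>\<bar> powr (1 / (2 * c)) \<and>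
      0 \<le> K \<and> K \<le> (2 * x + 1) ^ B \<longrightarrow>
    K * (4 * sqrt (exp (- 3 * x powr c))) \<le> exp (- (x powr c)) \<and>
    2 * \<epsilon> * K \<le> (exp (- 3 * x powr c))\<^sup>2 \<and>
    K\<^sup>2 * (2 / exp (- 3 * x powr c)) \<le> exp (sqrt x)"
proof -
  obtain N\<^sub>0 where N\<^sub>0: "N\<^sub>0 > 0"
    and log_bounds: "\<forall>x\<ge>N\<^sub>0. ln 4 + 2 * real B * ln (2 * x + 1) \<le> x powr c / 2 \<and> 20 \<le> x powr c"
    using eventually_log_bounds[OF c(1)] by blast
  show ?thesis
  proof (intro exI[of _ N\<^sub>0] conjI allI impI N\<^sub>0)
    fix x \<epsilon> K :: real
    assume H: "N\<^sub>0 \<le> x \<and> 0 < \<epsilon> \<and> \<epsilon> < 1 \<and> x \<le> \<bar>ln \<epsilon>\<bar> powr (1 / (2 * c)) \<and>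
      0 \<le> K \<and> K \<le> (2 * x + 1) ^ B"
    have x: "0 < x" using H N\<^sub>0 by linarith
    have "(2 * x + 1) ^ B = exp (real B * ln (2 * x + 1))"
      using x by (simp add: exp_of_nat_mult)
    then have "4 * ((2 * x + 1) ^ B)\<^sup>2 = exp (ln 4) * exp (real B * ln (2 * x + 1)) ^ 2"
      by simp
    also have "\<dots> = exp (ln 4 + 2 * real B * ln (2 * x + 1))"
      by (simp add: exp_add exp_of_nat_mult[symmetric] mult.commute mult.left_commute)
    also have "\<dots> \<le> exp (x powr c / 2)"
      using log_bounds H by simp
    finally have P: "4 * ((2 * x + 1) ^ B)\<^sup>2 \<le> exp (x powr c / 2)" .
    have sq: "(x powr c)\<^sup>2 = x powr (2 * c)"
      by (simp add: power2_eq_square powr_add[symmetric])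
    have "\<epsilon> \<le> exp (- ((x powr c)\<^sup>2))"
      unfolding sq using H c(1) x by (intro le_exp_neg_powr_of_le_abs_ln_powr) auto
    note bounds = exp_scale_inequalities[OF _ _ P _ _ this]
    have "20 \<le> x powr c" "1 \<le> (2 * x + 1) ^ B" using log_bounds H x by auto
    note bounds = bounds[OF this]
    show "K * (4 * sqrt (exp (- 3 * x powr c))) \<le> exp (- (x powr c))"
      and "2 * \<epsilon> * K \<le> (exp (- 3 * x powr c))\<^sup>2"
      using bounds H by auto
    have "1 \<le> x"
      using \<open>20 \<le> x powr c\<close> powr_le1[of c x] c(1) x by (cases "x \<le> 1") auto
    then have "(x powr c)\<^sup>2 \<le> sqrt x"
      unfolding sq using c by (simp add: powr_mono flip: powr_half_sqrt)
    then show "K\<^sup>2 * (2 / exp (- 3 * x powr c)) \<le> exp (sqrt x)"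
      using bounds(3) H by (meson exp_le_cancel_iff order_trans)
  qed
qed

lemma green_estimates_off_small_divisor_set:
  assumes ne: "idx d bs \<noteq> {}" and adm: "admissible_V d bs \<rho> Vh" and \<rho>: "0 < \<rho>"
    and eps: "0 \<le> \<epsilon>" and N: "0 < N" and \<delta>: "0 < \<delta>" "\<delta> \<le> 1"
    and measure: "real (card (cube d bs N)) * (4 * sqrt \<delta>) \<le> \<mu>"
    and dec: "2 * \<epsilon> * real (card (cube d bs N)) \<le> \<delta>\<^sup>2"
    and R: "(real (card (cube d bs N)))\<^sup>2 * (2 / \<delta>) \<le> R"
  shows "\<exists>X \<subseteq> Rd d.
    (\<forall>j<d. \<forall>\<theta>\<in>Rd d. slice X j \<theta> \<in> sets lebesgue \<and> emeasure lebesgue (slice X j \<theta>) \<le> ennreal \<mu>) \<and>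
    (\<forall>\<theta>\<in>Rd d - X. \<forall>Q\<in>elem_regions d bs N.
      invertible_on Q (hmat d bs Vh \<epsilon> \<omega> \<theta> E) \<and> opnorm Q (green d bs Vh \<epsilon> \<omega> Q E \<theta>) \<le> R \<and>
      (\<forall>n\<in>Q. \<forall>n'\<in>Q. real N / 10 \<le> real_of_int (supnorm d bs (lat_diff n n')) \<longrightarrow>
         cmod (green d bs Vh \<epsilon> \<omega> Q E \<theta> n n') \<le>
           exp (- (4 * \<rho> / 5) * real_of_int (supnorm d bs (lat_diff n n')))))"
proof (intro exI[of _ "small_divisor_set d bs \<omega> E N \<delta>"] conjI allI impI ballI)
  let ?X = "small_divisor_set d bs \<omega> E N \<delta>"
  show "?X \<subseteq> Rd d" by (auto simp: small_divisor_set_def)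
  fix j \<theta> assume j: "j < d" and \<theta>: "\<theta> \<in> Rd d"
  show "slice ?X j \<theta> \<in> sets lebesgue"
    using slice_small_divisor_set_open[OF j \<theta>] by simp
  show "emeasure lebesgue (slice ?X j \<theta>) \<le> ennreal \<mu>"
    using emeasure_slice_small_divisor_set_le[OF j \<theta> \<delta>(1)] measure
    by (meson ennreal_leI order_trans)
next
  fix \<theta> Q assume \<theta>: "\<theta> \<in> Rd d - small_divisor_set d bs \<omega> E N \<delta>" and "Q \<in> elem_regions d bs N"
  then have Q: "Q \<subseteq> cube d bs N" by (intro elem_regions_subset_cube)
  have D: "\<forall>n\<in>Q. \<delta> \<le> \<bar>diag_entry d bs \<omega> E \<theta> n\<bar>"
    using \<theta> Q by (force simp: small_divisor_set_def)
  have QL: "Q \<subseteq> Defs.lattice d bs" and K: "real (card Q) \<le> real (card (cube d bs N))"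
    using Q card_mono[OF finite_cube Q] by (auto simp: cube_def)
  note bounds = green_bounds[OF ne QL finite_subset[OF Q finite_cube] adm \<rho> eps \<delta> D K dec R]
  show "invertible_on Q (hmat d bs Vh \<epsilon> \<omega> \<theta> E)" by (rule bounds(1))
  show "opnorm Q (green d bs Vh \<epsilon> \<omega> Q E \<theta>) \<le> R" by (rule bounds(2))
  fix n n' assume n: "n \<in> Q" "n' \<in> Q"
    and far: "real N / 10 \<le> real_of_int (supnorm d bs (lat_diff n n'))"
  have "n \<noteq> n'"
    using far N supnorm_lat_diff_self[OF ne] by auto
  with n show "cmod (green d bs Vh \<epsilon> \<omega> Q E \<theta> n n')
      \<le> exp (- (4 * \<rho> / 5) * real_of_int (supnorm d bs (lat_diff n n')))"
    by (rule bounds(3))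
qed

theorem proposition3p3:
  fixes d :: nat and bs :: "nat \<Rightarrow> nat" and \<rho> c\<^sub>1 :: real
  assumes "d \<ge> 1"
    and "\<forall>i<d. bs i \<ge> 1"
    and "(\<Sum>i<d. bs i) > d"
    and "0 < \<rho>" and "\<rho> < 1"
    and "0 < c\<^sub>1" and "c\<^sub>1 < 1/4"
  shows "\<exists>N\<^sub>0 > (0::real). \<forall>Vh. admissible_V d bs \<rho> Vh \<longrightarrow>
    (\<forall>\<epsilon> N E \<omega>. 0 < \<epsilon> \<and> \<epsilon> < 1 \<and> N\<^sub>0 \<le> real N \<and>
        real N \<le> \<bar>ln \<epsilon>\<bar> powr (1 / (2 * c\<^sub>1)) \<and>
        (\<forall>p\<in>idx d bs. 0 \<le> \<omega> p \<and> \<omega> p \<le> 2 * pi) \<longrightarrow>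
      (\<exists>X \<subseteq> Rd d.
        (\<forall>j<d. \<forall>\<theta>\<in>Rd d. slice X j \<theta> \<in> sets lebesgue \<and>
            emeasure lebesgue (slice X j \<theta>) \<le> ennreal (exp (- (real N powr c\<^sub>1)))) \<and>
        (\<forall>\<theta>\<in>Rd d - X. \<forall>Q\<in>elem_regions d bs N.
            invertible_on Q (hmat d bs Vh \<epsilon> \<omega> \<theta> E) \<and>
            opnorm Q (green d bs Vh \<epsilon> \<omega> Q E \<theta>) \<le> exp (sqrt (real N)) \<and>
            (\<forall>n\<in>Q. \<forall>n'\<in>Q. real N / 10 \<le> real_of_int (supnorm d bs (lat_diff n n')) \<longrightarrow>
               cmod (green d bs Vh \<epsilon> \<omega> Q E \<theta> n n') \<le>
                 exp (- (4 * \<rho> / 5) * real_of_int (supnorm d bs (lat_diff n n')))))))"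
proof -
  have "(0, 0) \<in> idx d bs" using assms(1,2) by (force simp: idx_def)
  then have ne: "idx d bs \<noteq> {}" by blast
  obtain N\<^sub>0 where "N\<^sub>0 > 0" and scale: "\<forall>x \<epsilon> K. N\<^sub>0 \<le> x \<and> 0 < \<epsilon> \<and> \<epsilon> < 1 \<and>
      x \<le> \<bar>ln \<epsilon>\<bar> powr (1 / (2 * c\<^sub>1)) \<and> 0 \<le> K \<and> K \<le> (2 * x + 1) ^ card (idx d bs) \<longrightarrow>
    K * (4 * sqrt (exp (- 3 * x powr c\<^sub>1))) \<le> exp (- (x powr c\<^sub>1)) \<and>
    2 * \<epsilon> * K \<le> (exp (- 3 * x powr c\<^sub>1))\<^sup>2 \<and>
    K\<^sup>2 * (2 / exp (- 3 * x powr c\<^sub>1)) \<le> exp (sqrt x)"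
    using initial_scale_parameters[of c\<^sub>1 "card (idx d bs)"] assms(6,7) by auto
  show ?thesis
  proof (intro exI[of _ N\<^sub>0] conjI allI impI, goal_cases)
    case 1
    show ?case by fact
  next
    case (2 Vh \<epsilon> N E \<omega>)
    let ?K = "real (card (cube d bs N))" and ?\<delta> = "exp (- 3 * real N powr c\<^sub>1)"
    have "0 < N" using 2 \<open>N\<^sub>0 > 0\<close> by auto
    moreover have "?K * (4 * sqrt ?\<delta>) \<le> exp (- (real N powr c\<^sub>1))"
      and "2 * \<epsilon> * ?K \<le> ?\<delta>\<^sup>2" and "?K\<^sup>2 * (2 / ?\<delta>) \<le> exp (sqrt (real N))"
      using scale[rule_format, of "real N" \<epsilon> ?K] 2 card_cube_le by auto
    ultimately show ?case
      using green_estimates_off_small_divisor_set[OF ne 2(1) assms(4), of \<epsilon> N ?\<delta>] 2 by auto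
  qed
qed

end
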